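(* Let $T\in(\mathbb{C}^n)^{\otimes3}$ be a symmetric tensor which is $r$-diagonalisable. Then for all matrices $U\in M_{r,n}(\mathbb{C})$ whose rows $u_1,\dots,u_r$ are linearly independent and satisfy $T=\sum_{i=1}^ru_i^{\otimes3}$, the quantity $\|U\|_F^2+\|U^\dagger\|_F^2$ is the same.
   Context: $T$ is $r$-diagonalisable if $T=\sum_{i=1}^ru_i^{\otimes3}$ for some linearly independent $u_1,\dots,u_r\in\mathbb{C}^n$. $U^\dagger$ denotes the Moore–Penrose pseudoinverse of $U$. *)

theory Defs
  imports "HOL-Analysis.Analysis"
begin

text \<open>Order-3 tensors on C^n are functions of three indices of the finite type 'n.
  A matrix U in M_{r,n}(C) is an element of complex^'n^'r; its i-th row is U $ i.\<close>

type_synonym 'n tensor3 = "'n \<Rightarrow> 'n \<Rightarrow> 'n \<Rightarrow> complex"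

definition cube :: "complex ^ 'n \<Rightarrow> 'n tensor3" where
  "cube u = (\<lambda>a b c. u $ a * u $ b * u $ c)"

definition symmetric_tensor :: "'n tensor3 \<Rightarrow> bool" where
  "symmetric_tensor T \<longleftrightarrow>
     (\<forall>a b c. T a b c = T b a c \<and> T a b c = T a c b \<and> T a b c = T c b a)"

definition clin_indep_family :: "'i set \<Rightarrow> ('i \<Rightarrow> complex ^ 'n) \<Rightarrow> bool" where
  "clin_indep_family I u \<longleftrightarrow>
     (\<forall>c :: 'i \<Rightarrow> complex. (\<Sum>i\<in>I. (\<chi> k. c i * u i $ k)) = 0 \<longrightarrow> (\<forall>i\<in>I. c i = 0))"

definition r_diagonalisable :: "nat \<Rightarrow> 'n::finite tensor3 \<Rightarrow> bool" where
  "r_diagonalisable r T \<longleftrightarrow>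
     (\<exists>u :: nat \<Rightarrow> complex ^ 'n. clin_indep_family {..<r} u \<and>
        T = (\<lambda>a b c. \<Sum>i<r. cube (u i) a b c))"

definition ctrans :: "complex ^ 'n ^ 'm \<Rightarrow> complex ^ 'm ^ 'n" where
  "ctrans A = (\<chi> i j. cnj (A $ j $ i))"

definition penrose :: "complex ^ 'n ^ 'm \<Rightarrow> complex ^ 'm ^ 'n \<Rightarrow> bool" where
  "penrose A X \<longleftrightarrow> A ** X ** A = A \<and> X ** A ** X = X \<and>
     ctrans (A ** X) = A ** X \<and> ctrans (X ** A) = X ** A"

definition pinv :: "complex ^ 'n ^ 'm \<Rightarrow> complex ^ 'm ^ 'n" where
  "pinv A = (THE X. penrose A X)"

definition frob_sq :: "complex ^ 'n ^ 'm \<Rightarrow> real" where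
  "frob_sq A = (\<Sum>i\<in>UNIV. \<Sum>j\<in>UNIV. (cmod (A $ i $ j))\<^sup>2)"

end

theory Submission
  imports Defs
begin

text \<open>
  Independent rows make \<open>U\<close> right-invertible, and the trilinear form
  \<open>(x, y, z) \<mapsto> \<Sum>\<^sub>i (Ux)\<^sub>i (Uy)\<^sub>i (Uz)\<^sub>i\<close> depends on \<open>U\<close> only through the tensor
  \<open>\<Sum>\<^sub>i u\<^sub>i\<^sup>\<otimes>\<^sup>3\<close>. Evaluating it at vectors \<open>x\<close> with \<open>Ux = e\<^sub>a\<close> or \<open>Vx = e\<^sub>k\<close> for two
  decompositions \<open>U\<close>, \<open>V\<close> of the same tensor shows that every row of \<open>U\<close> is a nonzero
  multiple of a row of \<open>V\<close>, that distinct rows go to distinct rows, and that the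
  multipliers are cube roots of unity. Hence \<open>U = PV\<close> with \<open>P\<close> a permutation matrix times
  a unitary diagonal matrix. Then \<open>U\<^sup>\<dagger> = V\<^sup>\<dagger>P\<^sup>*\<close>, and the Frobenius norm is
  invariant under multiplication by unitary matrices.
\<close>

lemma matrix_vector_mult_axis:
  fixes A :: "'a::semiring_1 ^ 'n::finite ^ 'm"
  shows "(A *v axis k 1) $ i = A $ i $ k"
  by (simp add: matrix_vector_mult_def axis_def if_distrib[of "\<lambda>t. _ * t"] cong: if_cong)

lemma right_inverse_column:
  fixes U :: "'a::semiring_1 ^ 'n::finite ^ 'r::finite"
  assumes "U ** W = mat 1"
  shows "U *v column a W = axis a 1"
proof -
  have "(U *v column a W) $ i = (U ** W) $ i $ a" for i
    by (simp add: matrix_matrix_mult_def matrix_vector_mult_def column_def)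
  then show ?thesis
    using assms by (simp add: vec_eq_iff mat_def axis_def)
qed

lemma clin_indep_family_UNIV_iff:
  "clin_indep_family UNIV u \<longleftrightarrow> (\<forall>c. (\<Sum>i\<in>UNIV. c i *s u i) = 0 \<longrightarrow> (\<forall>i. c i = 0))"
  unfolding clin_indep_family_def vector_scalar_mult_def by simp

lemma clin_indep_rows_right_invertible:
  fixes U :: "complex ^ 'n::finite ^ 'r::finite"
  assumes "clin_indep_family UNIV (\<lambda>i. U $ i)"
  obtains W where "U ** W = mat 1"
proof -
  have "\<exists>W. U ** W = mat 1"
    using assms unfolding clin_indep_family_UNIV_iff matrix_right_invertible_independent_rows
    by (simp add: row_def)
  then show thesis
    using that by blast
qed

lemma clin_indep_family_scaled_inj:
  fixes u :: "'i::finite \<Rightarrow> complex ^ 'n"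
  assumes indep: "clin_indep_family UNIV u"
    and nonzero: "\<And>i. c i \<noteq> 0" and scaled: "\<And>i. u i = c i *s v (\<sigma> i)"
  shows "inj \<sigma>"
proof (rule injI, rule ccontr)
  fix a b
  assume "\<sigma> a = \<sigma> b" and "a \<noteq> b"
  define d where "d i = (if i = a then c b else 0) - (if i = b then c a else 0)" for i
  have smult_if: "(if P then t else 0) *s w = (if P then t *s w else 0)" for P t and w :: "complex ^ 'n"
    by simp
  have "(\<Sum>i\<in>UNIV. d i *s u i) = c b *s u a - c a *s u b"
    by (simp add: d_def sum_subtractf smult_if)
  also have "\<dots> = 0"
    using scaled \<open>\<sigma> a = \<sigma> b\<close> by (simp add: mult.commute)
  finally have "d a = 0"
    using indep unfolding clin_indep_family_UNIV_iff by blast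
  with nonzero \<open>a \<noteq> b\<close> show False
    by (simp add: d_def)
qed

lemma ctrans_mult: "ctrans (A ** B) = ctrans B ** ctrans A"
  by (simp add: vec_eq_iff ctrans_def matrix_matrix_mult_def mult.commute)

lemma ctrans_ctrans [simp]: "ctrans (ctrans A) = A"
  by (simp add: vec_eq_iff ctrans_def)

definition unitary :: "complex ^ 'n ^ 'n \<Rightarrow> bool" where
  "unitary Q \<longleftrightarrow> ctrans Q ** Q = mat 1 \<and> Q ** ctrans Q = mat 1"

lemma unitary_ctrans: "unitary Q \<Longrightarrow> unitary (ctrans Q)"
  by (simp add: unitary_def)

definition monomial_matrix :: "('r \<Rightarrow> 'r) \<Rightarrow> ('r \<Rightarrow> 'a::zero) \<Rightarrow> 'a ^ 'r ^ 'r" where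
  "monomial_matrix \<sigma> c = (\<chi> i j. if j = \<sigma> i then c i else 0)"

lemma monomial_matrix_mult_row:
  fixes A :: "'a::semiring_1 ^ 'n ^ 'r::finite"
  shows "(monomial_matrix \<sigma> c ** A) $ i = c i *s A $ \<sigma> i"
  by (simp add: vec_eq_iff monomial_matrix_def matrix_matrix_mult_def
      if_distrib[of "\<lambda>t. t * _"] cong: if_cong)

lemma monomial_matrix_mult:
  fixes c d :: "'r::finite \<Rightarrow> 'a::semiring_1"
  shows "monomial_matrix \<sigma> c ** monomial_matrix \<tau> d = monomial_matrix (\<tau> \<circ> \<sigma>) (\<lambda>i. c i * d (\<sigma> i))"
  by (simp add: vec_eq_iff monomial_matrix_mult_row) (simp add: monomial_matrix_def)

lemma monomial_matrix_id: "monomial_matrix id (\<lambda>_. 1) = mat 1"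
  by (simp add: vec_eq_iff monomial_matrix_def mat_def)

lemma monomial_matrix_mult_axis:
  fixes c :: "'r::finite \<Rightarrow> 'a::semiring_1"
  assumes "inj \<sigma>"
  shows "monomial_matrix \<sigma> c *v axis (\<sigma> a) 1 = axis a (c a)"
  unfolding vec_eq_iff matrix_vector_mult_axis
  using assms by (simp add: monomial_matrix_def axis_def inj_eq)

lemma ctrans_monomial_matrix:
  assumes "bij \<sigma>"
  shows "ctrans (monomial_matrix \<sigma> c) = monomial_matrix (inv \<sigma>) (\<lambda>i. cnj (c (inv \<sigma> i)))"
  using assms by (auto simp: vec_eq_iff ctrans_def monomial_matrix_def bij_inv_eq_iff bij_is_inj)

lemma unitary_monomial_matrix:
  fixes c :: "'r::finite \<Rightarrow> complex"
  assumes "bij \<sigma>" and "\<And>i. cmod (c i) = 1"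
  shows "unitary (monomial_matrix \<sigma> c)"
proof -
  have "c i * cnj (c i) = 1" for i
    using complex_norm_square[of "c i"] assms(2)[of i] by simp
  moreover have "\<sigma> \<circ> inv \<sigma> = id" and "inv \<sigma> \<circ> \<sigma> = id"
    using assms(1) by (simp_all add: bij_is_surj bij_is_inj flip: surj_iff inj_iff)
  ultimately show ?thesis
    using assms(1) by (simp add: unitary_def ctrans_monomial_matrix monomial_matrix_mult
        pointfree_idE mult.commute flip: monomial_matrix_id)
qed

lemma frob_sq_trace: "complex_of_real (frob_sq A) = trace (A ** ctrans A)"
  unfolding frob_sq_def trace_def matrix_matrix_mult_def ctrans_def of_real_sum complex_norm_square
  by simp

lemma frob_sq_unitary_left:
  assumes "unitary Q"
  shows "frob_sq (Q ** A) = frob_sq A"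
proof -
  have "trace (Q ** A ** ctrans (Q ** A)) = trace (Q ** (A ** ctrans A ** ctrans Q))"
    by (simp add: ctrans_mult matrix_mul_assoc)
  also have "\<dots> = trace (A ** ctrans A ** (ctrans Q ** Q))"
    by (subst trace_mul_sym) (simp add: matrix_mul_assoc)
  also have "\<dots> = trace (A ** ctrans A)"
    using assms by (simp add: unitary_def)
  finally show ?thesis
    by (metis frob_sq_trace of_real_eq_iff)
qed

lemma frob_sq_unitary_right:
  assumes "unitary Q"
  shows "frob_sq (A ** Q) = frob_sq A"
proof -
  have "trace (A ** Q ** ctrans (A ** Q)) = trace (A ** (Q ** ctrans Q) ** ctrans A)"
    by (simp add: ctrans_mult matrix_mul_assoc)
  also have "\<dots> = trace (A ** ctrans A)"
    using assms by (simp add: unitary_def)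
  finally show ?thesis
    by (metis frob_sq_trace of_real_eq_iff)
qed

lemma penrose_unique:
  assumes "penrose A X" and "penrose A Y"
  shows "X = Y"
proof -
  have x1: "A ** X ** A = A" and x2: "X ** A ** X = X"
    and x3: "ctrans (A ** X) = A ** X" and x4: "ctrans (X ** A) = X ** A"
    using assms(1) unfolding penrose_def by auto
  have y1: "A ** Y ** A = A" and y2: "Y ** A ** Y = Y"
    and y3: "ctrans (A ** Y) = A ** Y" and y4: "ctrans (Y ** A) = Y ** A"
    using assms(2) unfolding penrose_def by auto
  have "X = X ** ctrans (A ** X)"
    using x2 x3 by (simp add: matrix_mul_assoc)
  also have "\<dots> = X ** ctrans X ** ctrans (A ** Y ** A)"
    using y1 by (simp add: ctrans_mult matrix_mul_assoc)
  also have "\<dots> = X ** ctrans (A ** X) ** ctrans (A ** Y)"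
    by (simp add: ctrans_mult matrix_mul_assoc)
  also have "\<dots> = X ** A ** Y"
    using x2 x3 y3 by (simp add: matrix_mul_assoc)
  finally have X: "X = X ** A ** Y" .
  have "Y = ctrans (Y ** A) ** Y"
    using y2 y4 by simp
  also have "\<dots> = ctrans (A ** X ** A) ** ctrans Y ** Y"
    using x1 by (simp add: ctrans_mult matrix_mul_assoc)
  also have "\<dots> = ctrans (X ** A) ** ctrans (Y ** A) ** Y"
    by (simp add: ctrans_mult matrix_mul_assoc)
  also have "\<dots> = X ** A ** (Y ** A ** Y)"
    using x4 y4 by (simp add: matrix_mul_assoc)
  also have "\<dots> = X ** A ** Y"
    using y2 by simp
  finally show ?thesis
    using X by simp
qed

lemma pinv_eqI: "penrose A X \<Longrightarrow> pinv A = X"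
  unfolding pinv_def by (rule the_equality) (auto intro: penrose_unique)

lemma penrose_unitary_left:
  assumes "unitary Q" and "penrose A X"
  shows "penrose (Q ** A) (X ** ctrans Q)"
proof -
  have x1: "A ** X ** A = A" and x2: "X ** A ** X = X"
    and x3: "ctrans (A ** X) = A ** X" and x4: "ctrans (X ** A) = X ** A"
    using assms(2) unfolding penrose_def by auto
  have "X ** ctrans Q ** (Q ** A) = X ** (ctrans Q ** Q) ** A"
    by (simp add: matrix_mul_assoc)
  then have QQ: "X ** ctrans Q ** (Q ** A) = X ** A"
    using assms(1) by (simp add: unitary_def)
  show ?thesis
    unfolding penrose_def
  proof (intro conjI)
    show "Q ** A ** (X ** ctrans Q) ** (Q ** A) = Q ** A"
      using QQ x1 by (metis matrix_mul_assoc)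
    show "X ** ctrans Q ** (Q ** A) ** (X ** ctrans Q) = X ** ctrans Q"
      using QQ x2 by (metis matrix_mul_assoc)
    have "ctrans (Q ** A ** (X ** ctrans Q)) = Q ** ctrans (A ** X) ** ctrans Q"
      by (simp add: ctrans_mult matrix_mul_assoc)
    then show "ctrans (Q ** A ** (X ** ctrans Q)) = Q ** A ** (X ** ctrans Q)"
      using x3 by (simp add: matrix_mul_assoc)
    show "ctrans (X ** ctrans Q ** (Q ** A)) = X ** ctrans Q ** (Q ** A)"
      using QQ x4 by simp
  qed
qed

lemma frob_sq_pinv_unitary_left:
  assumes "unitary Q"
  shows "frob_sq (pinv (Q ** A)) = frob_sq (pinv A)"
proof (cases "\<exists>X. penrose A X")
  case True
  then obtain X where X: "penrose A X" ..
  have "pinv (Q ** A) = pinv A ** ctrans Q"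
    using pinv_eqI[OF X] pinv_eqI[OF penrose_unitary_left[OF assms X]] by simp
  then show ?thesis
    using frob_sq_unitary_right[OF unitary_ctrans[OF assms]] by simp
next
  case False
  have "\<not> penrose (Q ** A) Y" for Y
  proof
    assume "penrose (Q ** A) Y"
    then have "penrose (ctrans Q ** (Q ** A)) (Y ** Q)"
      using penrose_unitary_left[OF unitary_ctrans[OF assms]] by simp
    with False assms show False
      by (simp add: unitary_def matrix_mul_assoc)
  qed
  \<comment> \<open>Then both sides are the same junk value \<open>THE X. False\<close>.\<close>
  with False show ?thesis
    by (simp add: pinv_def)
qed

definition cube_sum :: "complex ^ 'n ^ 'r::finite \<Rightarrow> 'n tensor3" where
  "cube_sum U = (\<lambda>a b c. \<Sum>i\<in>UNIV. cube (U $ i) a b c)"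

definition cube_form ::
    "complex ^ 'n ^ 'r::finite \<Rightarrow> complex ^ 'n \<Rightarrow> complex ^ 'n \<Rightarrow> complex ^ 'n \<Rightarrow> complex" where
  "cube_form U x y z = (\<Sum>i\<in>UNIV. (U *v x) $ i * (U *v y) $ i * (U *v z) $ i)"

lemma cube_form_contraction:
  fixes U :: "complex ^ 'n::finite ^ 'r::finite"
  shows "cube_form U x y z =
    (\<Sum>c\<in>UNIV. \<Sum>b\<in>UNIV. \<Sum>a\<in>UNIV. cube_sum U a b c * x $ a * y $ b * z $ c)"
proof -
  have "cube_form U x y z = (\<Sum>i\<in>UNIV. \<Sum>c\<in>UNIV. \<Sum>b\<in>UNIV. \<Sum>a\<in>UNIV.
      U $ i $ a * x $ a * (U $ i $ b * y $ b) * (U $ i $ c * z $ c))"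
    unfolding cube_form_def matrix_vector_mult_def
    by (simp only: vec_lambda_beta sum_distrib_left sum_distrib_right)
  also have "\<dots> = (\<Sum>c\<in>UNIV. \<Sum>b\<in>UNIV. \<Sum>a\<in>UNIV. \<Sum>i\<in>UNIV.
      U $ i $ a * x $ a * (U $ i $ b * y $ b) * (U $ i $ c * z $ c))"
    by (subst sum.swap, intro sum.cong refl, subst sum.swap, intro sum.cong refl, rule sum.swap)
  finally show ?thesis
    unfolding cube_sum_def cube_def by (simp add: sum_distrib_left mult_ac)
qed

lemma cube_form_cong:
  fixes U V :: "complex ^ 'n::finite ^ 'r::finite"
  assumes "cube_sum U = cube_sum V"
  shows "cube_form U x y z = cube_form V x y z"
  using assms by (simp only: cube_form_contraction)

lemma cube_form_swap: "cube_form U x y z = cube_form U y x z"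
  by (simp add: cube_form_def mult_ac)

lemma cube_form_axis:
  fixes U :: "complex ^ 'n::finite ^ 'r::finite"
  assumes "U *v x = axis a 1"
  shows "cube_form U x y z = (U *v y) $ a * (U *v z) $ a"
  using assms by (simp add: cube_form_def axis_def if_distrib[of "\<lambda>t. t * _"] cong: if_cong)

lemma cube_sum_eq_row_multiple:
  fixes U V :: "complex ^ 'n::finite ^ 'r::finite"
  assumes eq: "cube_sum U = cube_sum V" and W: "U ** W = mat 1" and W': "V ** W' = mat 1"
  obtains k \<gamma> where "\<gamma> \<noteq> 0" and "U $ a = \<gamma> *s V $ k"
proof -
  define x where "x = column a W"
  have Ux: "U *v x = axis a 1"
    using W by (simp add: x_def right_inverse_column)
  have "cube_form V x x x = 1"
    using cube_form_cong[OF eq, of x x x] cube_form_axis[OF Ux] Ux by simp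
  then obtain k where \<beta>: "(V *v x) $ k \<noteq> 0"
    unfolding cube_form_def by (metis (no_types, lifting) mult_zero_left sum.neutral zero_neq_one)
  define y where "y = column k W'"
  have Vy: "V *v y = axis k 1"
    using W' by (simp add: y_def right_inverse_column)
  define \<gamma> where "\<gamma> = (U *v y) $ a"
  have \<gamma>\<beta>: "\<gamma> * \<gamma> = (V *v x) $ k"
    using cube_form_cong[OF eq, of x y y] cube_form_axis[OF Ux]
      cube_form_swap[of V x y y] cube_form_axis[OF Vy] Vy
    by (simp add: \<gamma>_def)
  have "\<gamma> * U $ a $ m = (V *v x) $ k * V $ k $ m" for m
    using cube_form_cong[OF eq, of x y "axis m 1"] cube_form_axis[OF Ux]
      cube_form_swap[of V x y] cube_form_axis[OF Vy]
    by (simp add: \<gamma>_def matrix_vector_mult_axis mult.commute)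
  then have "\<gamma> * U $ a $ m = \<gamma> * (\<gamma> * V $ k $ m)" for m
    by (simp add: \<gamma>\<beta> mult.assoc)
  moreover have "\<gamma> \<noteq> 0"
    using \<beta> \<gamma>\<beta> by auto
  ultimately have "U $ a = \<gamma> *s V $ k"
    by (simp add: vec_eq_iff)
  with \<open>\<gamma> \<noteq> 0\<close> show thesis by (rule that)
qed

lemma cube_sum_eq_monomial_cube_root:
  fixes V :: "complex ^ 'n::finite ^ 'r::finite"
  assumes eq: "cube_sum (monomial_matrix \<sigma> c ** V) = cube_sum V"
    and "inj \<sigma>" and W': "V ** W' = mat 1"
  shows "c a ^ 3 = 1"
proof -
  define x where "x = column (\<sigma> a) W'"
  have Vx: "V *v x = axis (\<sigma> a) 1"
    using W' by (simp add: x_def right_inverse_column)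
  then have "(monomial_matrix \<sigma> c ** V) *v x = axis a (c a)"
    using monomial_matrix_mult_axis[OF \<open>inj \<sigma>\<close>] by (simp flip: matrix_vector_mul_assoc)
  then have "cube_form (monomial_matrix \<sigma> c ** V) x x x = c a ^ 3"
    by (simp add: cube_form_def axis_def power3_eq_cube if_distrib[of "\<lambda>t. t * _"] cong: if_cong)
  moreover have "cube_form V x x x = 1"
    using cube_form_axis[OF Vx] Vx by simp
  ultimately show ?thesis
    using cube_form_cong[OF eq] by simp
qed

lemma cube_sum_eq_imp_monomial:
  fixes U V :: "complex ^ 'n::finite ^ 'r::finite"
  assumes indep_U: "clin_indep_family UNIV (\<lambda>i. U $ i)"
    and indep_V: "clin_indep_family UNIV (\<lambda>i. V $ i)"
    and eq: "cube_sum U = cube_sum V"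
  obtains \<sigma> c where "bij \<sigma>" and "\<And>i. c i ^ 3 = 1" and "U = monomial_matrix \<sigma> c ** V"
proof -
  obtain W where W: "U ** W = mat 1"
    using clin_indep_rows_right_invertible[OF indep_U] .
  obtain W' where W': "V ** W' = mat 1"
    using clin_indep_rows_right_invertible[OF indep_V] .
  have "\<forall>a. \<exists>k \<gamma>. \<gamma> \<noteq> 0 \<and> U $ a = \<gamma> *s V $ k"
    by (metis cube_sum_eq_row_multiple[OF eq W W'])
  then obtain \<sigma> c where nonzero: "\<And>a. c a \<noteq> 0" and rows: "\<And>a. U $ a = c a *s V $ \<sigma> a"
    by metis
  have U: "U = monomial_matrix \<sigma> c ** V"
    by (simp add: vec_eq_iff monomial_matrix_mult_row rows)
  have "inj \<sigma>"
    using indep_U nonzero rows by (rule clin_indep_family_scaled_inj[where v = "\<lambda>k. V $ k"])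
  then have "bij \<sigma>"
    by (simp add: bij_def finite_UNIV_inj_surj)
  moreover have "c i ^ 3 = 1" for i
    using cube_sum_eq_monomial_cube_root[OF eq[unfolded U] \<open>inj \<sigma>\<close> W'] .
  ultimately show thesis
    using that U by blast
qed

theorem lemma2p7:
  fixes T :: "'n::finite tensor3"
    and U V :: "complex ^ 'n ^ 'r::finite"
  assumes "symmetric_tensor T"
    and "r_diagonalisable CARD('r) T"
    and "clin_indep_family UNIV (\<lambda>i. U $ i)"
    and "T = (\<lambda>a b c. \<Sum>i\<in>UNIV. cube (U $ i) a b c)"
    and "clin_indep_family UNIV (\<lambda>i. V $ i)"
    and "T = (\<lambda>a b c. \<Sum>i\<in>UNIV. cube (V $ i) a b c)"
  shows "frob_sq U + frob_sq (pinv U) = frob_sq V + frob_sq (pinv V)"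
proof -
  \<comment> \<open>Symmetry and \<open>r\<close>-diagonalisability of \<open>T\<close> already follow from its decomposition by \<open>U\<close>.\<close>
  have "cube_sum U = cube_sum V"
    using assms(4,6) by (simp add: cube_sum_def)
  then obtain \<sigma> c where "bij \<sigma>" and roots: "\<And>i. c i ^ 3 = 1"
    and U: "U = monomial_matrix \<sigma> c ** V"
    using cube_sum_eq_imp_monomial assms(3,5) by blast
  have "cmod (c i) = 1" for i
    using power_eq_1_iff[OF roots[of i]] by simp
  with \<open>bij \<sigma>\<close> have "unitary (monomial_matrix \<sigma> c)"
    by (rule unitary_monomial_matrix)
  then show ?thesis
    unfolding U by (simp add: frob_sq_unitary_left frob_sq_pinv_unitary_left)
qed

end
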